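(* For all $j\ge0$ and all $x,u\in O$: (1) $D_j(\alpha x)=\alpha^jD_j(x)$ for $\alpha\in\mathbf{F}_q^*$; (2) $D_j(x+u)=\sum_{e+f=j}\binom{j}{e}D_e(x)D_f(u)$; (3) $D'_j(\alpha x)=\alpha^jD'_j(x)$ for $\alpha\in\mathbf{F}_q^*$; (4) $D'_j(x+u)=\sum_{e+f=j}\binom{j}{e}D_e(x)D'_f(u)$. Here the sums run over pairs of nonnegative integers $(e,f)$ and binomial coefficients are read in $\mathbf{F}_q$.
   Context: Let $q$ be a prime power, $O=\mathbf{F}_q[[T]]$. Hasse derivatives: $\mathcal{D}_n(\sum_ia_iT^i)=\sum_i\binom{i}{n}a_iT^{i-n}$ (binomials in $\mathbf{F}_q$). For $j\ge0$ with base-$q$ expansion $j=\alpha_0+\alpha_1q+\cdots+\alpha_sq^s$ ($0\le\alpha_i<q$): $D_j(x)=\prod_{n=0}^s\mathcal{D}_n(x)^{\alpha_n}$ ($D_0=1$), and $D'_j(x)=\prod_{n=0}^sD'_{\alpha_nq^n}(x)$ where $D'_{\alpha q^n}(x)=\mathcal{D}_n(x)^\alpha$ if $0\le\alpha<q-1$ and $D'_{(q-1)q^n}(x)=\mathcal{D}_n(x)^{q-1}-1$. *)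

theory Defs
  imports "HOL-Computational_Algebra.Formal_Power_Series" "HOL-Library.Cardinality"
begin

text \<open>O = F_q[[T]] is modelled as 'a fps for a finite field type 'a with q = CARD('a).\<close>

definition hasse :: "nat \<Rightarrow> 'a::field fps \<Rightarrow> 'a fps" where
  "hasse n x = Abs_fps (\<lambda>k. of_nat ((k + n) choose n) * fps_nth x (k + n))"

definition qdigit :: "'a::{field,finite} itself \<Rightarrow> nat \<Rightarrow> nat \<Rightarrow> nat" where
  "qdigit (t::'a itself) j n = (j div CARD('a) ^ n) mod CARD('a)"

text \<open>D_j(x) = prod_n (hasse n x)^(alpha_n). Digits with index n > j vanish (q >= 2),
  so taking the product over n <= j covers the whole base-q expansion.\<close>
definition Dj :: "nat \<Rightarrow> 'a::{field,finite} fps \<Rightarrow> 'a fps" where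
  "Dj j x = (\<Prod>n\<in>{..j}. hasse n x ^ qdigit TYPE('a) j n)"

text \<open>D'_(alpha q^n)(x).\<close>
definition Dprime_digit :: "nat \<Rightarrow> nat \<Rightarrow> 'a::{field,finite} fps \<Rightarrow> 'a fps" where
  "Dprime_digit a n x = (if a < CARD('a) - 1 then hasse n x ^ a
                         else hasse n x ^ (CARD('a) - 1) - 1)"

definition Dpj :: "nat \<Rightarrow> 'a::{field,finite} fps \<Rightarrow> 'a fps" where
  "Dpj j x = (\<Prod>n\<in>{..j}. Dprime_digit (qdigit TYPE('a) j n) n x)"

end

(*
  D_j and D'_j are products, over the base-q digits alpha_n of j, of factors that depend
  only on alpha_n and on the F_q-linear Hasse derivative hasse n. Homogeneity holds because
  a^q = a in F_q, so that a^j = prod_n a^(alpha_n). For the addition formulas each digit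
  factor is expanded binomially, and the digitwise expansions recombine by Lucas' theorem
  binom(j, e) = prod_n binom(alpha_n, beta_n) in F_q, which comes from (1 + y)^q = 1 + y^q.
  For D'_j the extra -1 in the digit q - 1 pairs only with the digit beta_n = 0 of e.
*)
theory Submission
  imports Defs "HOL-Computational_Algebra.Polynomial"
begin

lemma card_field_ge_2: "CARD('a::{field,finite}) \<ge> 2"
proof -
  have "card {0::'a, 1} \<le> CARD('a)"
    by (rule card_mono) auto
  then show ?thesis
    by simp
qed

lemma power_card_minus_one_eq_1:
  fixes x :: "'a::{field,finite}"
  assumes "x \<noteq> 0"
  shows "x ^ (CARD('a) - 1) = 1"
proof -
  let ?U = "UNIV - {0::'a}"
  have "(\<Prod>y\<in>?U. y) = (\<Prod>y\<in>?U. x * y)"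
    by (rule prod.reindex_bij_witness[of _ "\<lambda>y. x * y" "\<lambda>y. y / x"]) (use assms in auto)
  also have "\<dots> = x ^ (CARD('a) - 1) * (\<Prod>y\<in>?U. y)"
    by (simp add: prod.distrib card_Diff_singleton)
  finally show ?thesis
    by simp
qed

lemma power_card_eq_self:
  fixes x :: "'a::{field,finite}"
  shows "x ^ CARD('a) = x"
proof (cases "x = 0")
  case False
  have "x ^ CARD('a) = x * x ^ (CARD('a) - 1)"
    using card_field_ge_2[where 'a='a] by (simp flip: power_Suc)
  then show ?thesis
    using power_card_minus_one_eq_1[OF False] by simp
qed (use card_field_ge_2[where 'a='a] in simp)

lemma of_nat_card_choose_eq_0:
  assumes "0 < k" "k < CARD('a::{field,finite})"
  shows "(of_nat (CARD('a) choose k) :: 'a) = 0"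
proof -
  define q where "q = CARD('a)"
  have q: "q \<ge> 2"
    unfolding q_def by (rule card_field_ge_2)
  define p :: "'a poly" where "p = (\<Sum>i\<in>{1..q-1}. monom (of_nat (q choose i)) i)"
  \<comment> \<open>\<open>(y + 1)^q = y^q + 1\<close> at every point of the field, so \<open>p\<close> has \<open>q\<close> roots but degree \<open>< q\<close>.\<close>
  have "poly p y = 0" for y :: 'a
  proof -
    have "(y + 1) ^ q = (\<Sum>i\<in>insert 0 (insert q {1..q-1}). of_nat (q choose i) * y ^ i)"
      unfolding binomial_ring[of y 1 q] using q by (intro sum.cong) auto
    also have "\<dots> = 1 + (y ^ q + poly p y)"
      using q by (simp add: p_def poly_sum poly_monom)
    finally show ?thesis
      using power_card_eq_self[of y] power_card_eq_self[of "y + 1"] by (simp add: q_def)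
  qed
  moreover have "degree p \<le> q - 1"
    unfolding p_def by (intro degree_sum_le) (auto intro: order.trans[OF degree_monom_le])
  ultimately have "p = 0"
    using q by (intro poly_eqI_degree[where A = UNIV]) (auto simp: q_def)
  then have "coeff p k = 0"
    by simp
  then show ?thesis
    using assms by (simp add: p_def q_def coeff_sum split: if_splits)
qed

lemma of_nat_card_plus_choose:
  "(of_nat ((CARD('a::{field,finite}) + n) choose r) :: 'a) =
     of_nat (n choose r) + (if CARD('a) \<le> r then of_nat (n choose (r - CARD('a))) else 0)"
proof -
  define q where "q = CARD('a)"
  have q: "q \<ge> 2"
    unfolding q_def by (rule card_field_ge_2)
  have "(of_nat ((q + n) choose r) :: 'a) =
      (\<Sum>k\<le>r. of_nat (q choose k) * of_nat (n choose (r - k)))"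
    by (simp flip: vandermonde)
  also have "\<dots> = (\<Sum>k\<in>{..r} \<inter> {0, q}. of_nat (q choose k) * of_nat (n choose (r - k)))"
  proof (intro sum.mono_neutral_right ballI)
    fix k
    assume "k \<in> {..r} - {..r} \<inter> {0, q}"
    then have "0 < k" "k \<noteq> q"
      by auto
    then have "(of_nat (q choose k) :: 'a) = 0"
      by (cases "k < q") (simp_all add: q_def of_nat_card_choose_eq_0 binomial_eq_0)
    then show "of_nat (q choose k) * of_nat (n choose (r - k)) = (0 :: 'a)"
      by simp
  qed auto
  also have "\<dots> = of_nat (n choose r) + (if q \<le> r then of_nat (n choose (r - q)) else 0)"
    using q by (cases "q \<le> r") (auto simp: Int_insert_right)
  finally show ?thesis
    by (simp add: q_def)
qed

lemma of_nat_choose_lucas: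
  assumes "a < CARD('a::{field,finite})" "b < CARD('a)"
  shows "(of_nat ((a + CARD('a) * m) choose (b + CARD('a) * e)) :: 'a) =
         of_nat (a choose b) * of_nat (m choose e)"
proof (induction m arbitrary: e)
  case 0
  show ?case
  proof (cases e)
    case (Suc e')
    then have "a < b + CARD('a) * e"
      using assms by (simp add: trans_less_add2)
    then show ?thesis
      using Suc by (simp add: binomial_eq_0)
  qed simp
next
  case (Suc m)
  have shift: "a + CARD('a) * Suc m = CARD('a) + (a + CARD('a) * m)"
    by simp
  show ?case
  proof (cases e)
    case 0
    then show ?thesis
      using assms Suc.IH[of 0] by (simp only: shift of_nat_card_plus_choose) simp
  next
    case (Suc e')
    have "b + CARD('a) * e - CARD('a) = b + CARD('a) * e'"
      using Suc by simp
    then have "(of_nat ((a + CARD('a) * Suc m) choose (b + CARD('a) * e)) :: 'a) =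
        of_nat ((a + CARD('a) * m) choose (b + CARD('a) * e)) +
        of_nat ((a + CARD('a) * m) choose (b + CARD('a) * e'))"
      using Suc by (simp only: shift of_nat_card_plus_choose) simp
    also have "\<dots> = of_nat (a choose b) * (of_nat (m choose e) + of_nat (m choose e'))"
      using Suc.IH by (simp add: distrib_left)
    also have "\<dots> = of_nat (a choose b) * of_nat (Suc m choose e)"
      using Suc by simp
    finally show ?thesis .
  qed
qed

lemma nat_digit_induct [consumes 1, case_names zero digit]:
  fixes q :: nat
  assumes "2 \<le> q"
    and "P 0"
    and "\<And>a m. a < q \<Longrightarrow> P m \<Longrightarrow> P (a + q * m)"
  shows "P j"
proof (induction j rule: less_induct)
  case (less j)
  show ?case
  proof (cases "j = 0")
    case False
    then have "P (j div q)"
      using assms(1) by (intro less) simp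
    then have "P (j mod q + q * (j div q))"
      using assms(1) by (intro assms(3)) simp_all
    then show ?thesis
      by simp
  qed (use assms(2) in simp)
qed

lemma sum_lessThan_mult_Suc_split:
  fixes q :: nat
  assumes "0 < q"
  shows "(\<Sum>e<q * Suc m. f e) = (\<Sum>e'\<le>m. \<Sum>b<q. f (b + q * e'))"
proof -
  have "(\<Sum>e'\<le>m. \<Sum>b<q. f (b + q * e')) = (\<Sum>(e', b)\<in>{..m} \<times> {..<q}. f (b + q * e'))"
    by (rule sum.cartesian_product)
  also have "\<dots> = (\<Sum>e<q * Suc m. f e)"
  proof (rule sum.reindex_bij_witness[of _ "\<lambda>e. (e div q, e mod q)" "\<lambda>(e', b). b + q * e'"])
    fix e
    assume "e \<in> {..<q * Suc m}"
    then show "(e div q, e mod q) \<in> {..m} \<times> {..<q}"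
      using assms less_mult_imp_div_less[of e "Suc m" q] by (auto simp: mult.commute)
  next
    have "b + q * e' < q * Suc m" if "b < q" "e' \<le> m" for b e'
      using that add_less_le_mono[OF that(1) mult_le_mono2[OF that(2)]] by simp
    then show "(case p of (e', b) \<Rightarrow> b + q * e') \<in> {..<q * Suc m}"
      if "p \<in> {..m} \<times> {..<q}" for p
      using that by auto
  qed auto
  finally show ?thesis ..
qed

lemma sum_of_nat_choose_lucas:
  fixes G :: "nat \<Rightarrow> 'a::{field,finite} fps"
  assumes "a < CARD('a)"
  shows "(\<Sum>e\<le>a + CARD('a) * m. fps_const (of_nat ((a + CARD('a) * m) choose e)) * G e) =
    (\<Sum>e'\<le>m. \<Sum>b\<le>a. fps_const (of_nat (a choose b) * of_nat (m choose e')) * G (b + CARD('a) * e'))"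
proof -
  define q where "q = CARD('a)"
  define F where "F e = fps_const (of_nat ((a + q * m) choose e)) * G e" for e
  have "(\<Sum>e\<le>a + q * m. F e) = (\<Sum>e<q * Suc m. F e)"
    using assms by (intro sum.mono_neutral_left) (auto simp: F_def q_def binomial_eq_0)
  also have "\<dots> = (\<Sum>e'\<le>m. \<Sum>b<q. F (b + q * e'))"
    using card_field_ge_2[where 'a='a] by (intro sum_lessThan_mult_Suc_split) (simp add: q_def)
  also have "\<dots> = (\<Sum>e'\<le>m. \<Sum>b<q. fps_const (of_nat (a choose b) * of_nat (m choose e')) * G (b + q * e'))"
    using assms by (intro sum.cong refl) (simp add: F_def q_def of_nat_choose_lucas)
  also have "\<dots> = (\<Sum>e'\<le>m. \<Sum>b\<le>a. fps_const (of_nat (a choose b) * of_nat (m choose e')) * G (b + q * e'))"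
    using assms by (intro sum.cong refl sum.mono_neutral_right) (auto simp: q_def binomial_eq_0)
  finally show ?thesis
    by (simp add: F_def q_def)
qed

text \<open>
  Both \<open>D\<^sub>j\<close> and \<open>D'\<^sub>j\<close> are digit products \<open>\<Prod>\<^sub>n K \<alpha>\<^sub>n n\<close>; recursing on the lowest
  digit reduces each claim about them to a claim about a single digit factor.
\<close>
function qdigit_prod :: "(nat \<Rightarrow> nat \<Rightarrow> 'a::{field,finite} fps) \<Rightarrow> nat \<Rightarrow> nat \<Rightarrow> 'a fps" where
  "qdigit_prod K s j =
    (if j = 0 then 1 else K (j mod CARD('a)) s * qdigit_prod K (Suc s) (j div CARD('a)))"
  by auto
termination
  by (relation "measure (\<lambda>(K, s, j). j)") (use card_field_ge_2[where 'a='a] in auto)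

declare qdigit_prod.simps [simp del]

lemma qdigit_prod_0 [simp]: "qdigit_prod K s 0 = 1"
  by (simp add: qdigit_prod.simps)

lemma qdigit_prod_digit:
  fixes K :: "nat \<Rightarrow> nat \<Rightarrow> 'a::{field,finite} fps"
  assumes "K 0 s = 1" "a < CARD('a)"
  shows "qdigit_prod K s (a + CARD('a) * m) = K a s * qdigit_prod K (Suc s) m"
  using assms by (cases "a + CARD('a) * m = 0") (auto simp: qdigit_prod.simps[of K s])

lemma qdigit_prod_eq_prod:
  fixes K :: "nat \<Rightarrow> nat \<Rightarrow> 'a::{field,finite} fps"
  assumes "\<And>s. K 0 s = 1" "j < CARD('a) ^ Suc N"
  shows "(\<Prod>n\<le>N. K (qdigit TYPE('a) j n) (n + s)) = qdigit_prod K s j"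
  using assms(2)
proof (induction N arbitrary: j s)
  case 0
  then show ?case
    using qdigit_prod_digit[of K s j 0] assms(1) by (simp add: qdigit_def)
next
  case (Suc N)
  have "j div CARD('a) < CARD('a) ^ Suc N"
    using Suc.prems by (simp add: div_less_iff_less_mult mult.commute)
  then have IH: "(\<Prod>n\<le>N. K (qdigit TYPE('a) (j div CARD('a)) n) (n + Suc s)) =
      qdigit_prod K (Suc s) (j div CARD('a))"
    by (rule Suc.IH)
  have "qdigit TYPE('a) j (Suc n) = qdigit TYPE('a) (j div CARD('a)) n" for n
    by (simp add: qdigit_def div_mult2_eq)
  then have "(\<Prod>n\<le>Suc N. K (qdigit TYPE('a) j n) (n + s)) =
      K (j mod CARD('a)) s * qdigit_prod K (Suc s) (j div CARD('a))"
    unfolding prod.atMost_Suc_shift IH[symmetric] by (simp add: qdigit_def)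
  also have "\<dots> = qdigit_prod K s j"
    using assms(1) qdigit_prod_digit[of K s "j mod CARD('a)" "j div CARD('a)", unfolded mod_mult_div_eq]
    by simp
  finally show ?case .
qed

lemma less_card_power_Suc: "j < CARD('a::{field,finite}) ^ Suc j"
proof -
  have "j < 2 ^ Suc j"
    using less_exp[of "Suc j"] by simp
  also have "\<dots> \<le> CARD('a) ^ Suc j"
    using card_field_ge_2 by (rule power_mono) simp
  finally show ?thesis .
qed

lemma qdigit_prod_scale:
  fixes K L :: "nat \<Rightarrow> nat \<Rightarrow> 'a::{field,finite} fps"
  assumes K0: "\<And>s. K 0 s = 1"
    and L: "\<And>a s. a < CARD('a) \<Longrightarrow> L a s = fps_const (c ^ a) * K a s"
  shows "qdigit_prod L s j = fps_const (c ^ j) * qdigit_prod K s j"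
  using card_field_ge_2[where 'a='a]
proof (induction j arbitrary: s rule: nat_digit_induct)
  case zero
  show ?case
    by simp
next
  case (digit a m)
  have L0: "L 0 s = 1" for s
    using L[of 0 s] K0 card_field_ge_2[where 'a='a] by simp
  have "qdigit_prod L s (a + CARD('a) * m) = L a s * qdigit_prod L (Suc s) m"
    using L0 digit by (intro qdigit_prod_digit)
  also have "\<dots> = fps_const (c ^ a * c ^ m) * (K a s * qdigit_prod K (Suc s) m)"
    using L[of a s] digit by (simp add: ac_simps)
  also have "c ^ a * c ^ m = c ^ (a + CARD('a) * m)"
    by (simp add: power_add power_mult power_card_eq_self)
  also have "K a s * qdigit_prod K (Suc s) m = qdigit_prod K s (a + CARD('a) * m)"
    using K0 digit by (intro qdigit_prod_digit[symmetric])
  finally show ?case .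
qed

lemma qdigit_prod_binomial:
  fixes X Y Z :: "nat \<Rightarrow> nat \<Rightarrow> 'a::{field,finite} fps"
  assumes X0: "\<And>s. X 0 s = 1" and Y0: "\<And>s. Y 0 s = 1" and Z0: "\<And>s. Z 0 s = 1"
    and Z: "\<And>a s. a < CARD('a) \<Longrightarrow>
      Z a s = (\<Sum>b\<le>a. fps_const (of_nat (a choose b)) * X b s * Y (a - b) s)"
  shows "qdigit_prod Z s j =
    (\<Sum>e\<le>j. fps_const (of_nat (j choose e)) * qdigit_prod X s e * qdigit_prod Y s (j - e))"
  using card_field_ge_2[where 'a='a]
proof (induction j arbitrary: s rule: nat_digit_induct)
  case zero
  show ?case
    by simp
next
  case (digit a m)
  let ?q = "CARD('a)"
  let ?X = "\<lambda>b. fps_const (of_nat (a choose b)) * X b s * Y (a - b) s"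
  let ?Y = "\<lambda>e'. fps_const (of_nat (m choose e')) *
    qdigit_prod X (Suc s) e' * qdigit_prod Y (Suc s) (m - e')"
  have summand: "fps_const (of_nat (a choose b) * of_nat (m choose e')) *
      (qdigit_prod X s (b + ?q * e') * qdigit_prod Y s (a + ?q * m - (b + ?q * e'))) = ?X b * ?Y e'"
    if "b \<le> a" "e' \<le> m" for b e'
  proof -
    have "a + ?q * m - (b + ?q * e') = (a - b) + ?q * (m - e')"
      using that by (simp add: diff_mult_distrib2)
    moreover have "qdigit_prod X s (b + ?q * e') = X b s * qdigit_prod X (Suc s) e'"
      using that digit X0 by (intro qdigit_prod_digit) simp_all
    moreover have "qdigit_prod Y s ((a - b) + ?q * (m - e')) =
        Y (a - b) s * qdigit_prod Y (Suc s) (m - e')"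
      using digit Y0 by (intro qdigit_prod_digit) simp_all
    ultimately show ?thesis
      by (simp only: fps_const_mult) (simp add: mult_ac)
  qed
  have "(\<Sum>e\<le>a + ?q * m. fps_const (of_nat ((a + ?q * m) choose e)) *
        qdigit_prod X s e * qdigit_prod Y s (a + ?q * m - e)) =
      (\<Sum>e'\<le>m. \<Sum>b\<le>a. fps_const (of_nat (a choose b) * of_nat (m choose e')) *
        (qdigit_prod X s (b + ?q * e') * qdigit_prod Y s (a + ?q * m - (b + ?q * e'))))"
    using sum_of_nat_choose_lucas[OF digit(1),
        of m "\<lambda>e. qdigit_prod X s e * qdigit_prod Y s (a + ?q * m - e)"]
    by (simp add: mult.assoc)
  also have "\<dots> = (\<Sum>e'\<le>m. \<Sum>b\<le>a. ?X b * ?Y e')"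
    by (intro sum.cong refl summand) auto
  also have "\<dots> = sum ?X {..a} * sum ?Y {..m}"
    unfolding sum_product by (rule sum.swap)
  also have "\<dots> = Z a s * qdigit_prod Z (Suc s) m"
    using Z digit by simp
  also have "\<dots> = qdigit_prod Z s (a + ?q * m)"
    using Z0 digit by (intro qdigit_prod_digit[symmetric])
  finally show ?case ..
qed

lemma hasse_add: "hasse n (x + u) = hasse n x + hasse n u"
  by (simp add: hasse_def fps_eq_iff distrib_left)

lemma hasse_fps_const_mult: "hasse n (fps_const c * x) = fps_const c * hasse n x"
  by (simp add: hasse_def fps_eq_iff)

lemma power_hasse_add:
  "hasse n (x + u) ^ a =
    (\<Sum>b\<le>a. fps_const (of_nat (a choose b)) * hasse n x ^ b * hasse n u ^ (a - b))"
  by (simp add: hasse_add binomial_ring fps_of_nat)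

lemma Dj_eq_qdigit_prod: "Dj j x = qdigit_prod (\<lambda>a n. hasse n x ^ a) 0 j"
  unfolding Dj_def
  using qdigit_prod_eq_prod[of "\<lambda>a n. hasse n x ^ a" j j 0] less_card_power_Suc[of j] by simp

lemma Dprime_digit_eq:
  fixes x :: "'a::{field,finite} fps"
  assumes "a < CARD('a)"
  shows "Dprime_digit a n x = hasse n x ^ a - of_bool (a = CARD('a) - 1)"
  using assms by (auto simp: Dprime_digit_def)

lemma Dprime_digit_0 [simp]: "Dprime_digit 0 n (x :: 'a::{field,finite} fps) = 1"
  using card_field_ge_2[where 'a='a] by (simp add: Dprime_digit_eq)

lemma Dpj_eq_qdigit_prod: "Dpj j x = qdigit_prod (\<lambda>a n. Dprime_digit a n x) 0 j"
  unfolding Dpj_def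
  using qdigit_prod_eq_prod[of "\<lambda>a n. Dprime_digit a n x" j j 0] less_card_power_Suc[of j] by simp

lemma Dprime_digit_fps_const_mult:
  fixes x :: "'a::{field,finite} fps"
  assumes "c \<noteq> 0" "a < CARD('a)"
  shows "Dprime_digit a n (fps_const c * x) = fps_const (c ^ a) * Dprime_digit a n x"
proof -
  have "fps_const (c ^ a) * of_bool (a = CARD('a) - 1) = of_bool (a = CARD('a) - 1)"
    using power_card_minus_one_eq_1[OF assms(1)] by auto
  then show ?thesis
    using assms(2)
    by (simp add: Dprime_digit_eq hasse_fps_const_mult power_mult_distrib fps_const_power
        right_diff_distrib)
qed

lemma Dprime_digit_add:
  fixes x :: "'a::{field,finite} fps"
  assumes "a < CARD('a)"
  shows "Dprime_digit a n (x + u) =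
    (\<Sum>b\<le>a. fps_const (of_nat (a choose b)) * hasse n x ^ b * Dprime_digit (a - b) n u)"
proof -
  \<comment> \<open>Since \<open>b \<le> a < q\<close>, the correction term \<open>-1\<close> of \<open>D'\<close> survives only for \<open>b = 0\<close>.\<close>
  have "(\<Sum>b\<le>a. fps_const (of_nat (a choose b)) * hasse n x ^ b * of_bool (a - b = CARD('a) - 1)) =
      (\<Sum>b\<le>a. if b = 0 then of_bool (a = CARD('a) - 1) else 0)"
    using assms by (intro sum.cong refl) auto
  then show ?thesis
    using assms by (simp add: Dprime_digit_eq power_hasse_add right_diff_distrib sum_subtractf)
qed

theorem proposition4:
  fixes j :: nat and x u :: "'a::{field,finite} fps" and \<alpha> :: 'a
  assumes "\<alpha> \<noteq> 0"
  shows "Dj j (fps_const \<alpha> * x) = fps_const (\<alpha> ^ j) * Dj j x \<and>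
         Dj j (x + u) = (\<Sum>e\<in>{..j}. fps_const (of_nat (j choose e)) * Dj e x * Dj (j - e) u) \<and>
         Dpj j (fps_const \<alpha> * x) = fps_const (\<alpha> ^ j) * Dpj j x \<and>
         Dpj j (x + u) = (\<Sum>e\<in>{..j}. fps_const (of_nat (j choose e)) * Dj e x * Dpj (j - e) u)"
proof (intro conjI)
  show "Dj j (fps_const \<alpha> * x) = fps_const (\<alpha> ^ j) * Dj j x"
    unfolding Dj_eq_qdigit_prod
    by (rule qdigit_prod_scale) (simp_all add: hasse_fps_const_mult power_mult_distrib fps_const_power)
  show "Dj j (x + u) = (\<Sum>e\<in>{..j}. fps_const (of_nat (j choose e)) * Dj e x * Dj (j - e) u)"
    unfolding Dj_eq_qdigit_prod by (rule qdigit_prod_binomial) (simp_all add: power_hasse_add)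
  show "Dpj j (fps_const \<alpha> * x) = fps_const (\<alpha> ^ j) * Dpj j x"
    unfolding Dpj_eq_qdigit_prod
    by (rule qdigit_prod_scale) (simp_all add: Dprime_digit_fps_const_mult assms)
  show "Dpj j (x + u) = (\<Sum>e\<in>{..j}. fps_const (of_nat (j choose e)) * Dj e x * Dpj (j - e) u)"
    unfolding Dpj_eq_qdigit_prod Dj_eq_qdigit_prod
    by (rule qdigit_prod_binomial) (simp_all add: Dprime_digit_add)
qed

end
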